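(* (1) Let $M$ and $M'$ be $R$-modules with $W_R(M)\subseteq W_R(M')$. If $M'$ satisfies the dual of Property $\mathcal{A}$ (respectively, the dual of strong Property $\mathcal{A}$), then $M\oplus M'$ satisfies the dual of Property $\mathcal{A}$ (respectively, the dual of strong Property $\mathcal{A}$). (2) Let $N$ be a small submodule of an $R$-module $M$ (i.e. $X+N=M$ implies $X=M$ for every submodule $X$ of $M$). Then $M$ satisfies the dual of Property $\mathcal{A}$ if and only if $M/N$ does; and $M$ is secondal if and only if $M/N$ is secondal.
   Context: All rings are commutative with identity. For an $R$-module $M$, $W_R(M)=\{r\in R : rM\neq M\}$. An $R$-module $M$ satisfies the dual of Property $\mathcal{A}$ if for every finitely generated ideal $I$ of $R$ with $I\subseteq W_R(M)$ we have $IM\neq M$. A proper submodule $L$ of $M$ is completely irreducible if whenever $L=\bigcap_{i\in I}L_i$ for a family $\{L_i\}_{i\in I}$ of submodules of $M$, then $L=L_i$ for some $i$. An $R$-module $M$ satisfies the dual of strong Property $\mathcal{A}$ if for any $a_1,\dots,a_n\in W_R(M)$ there exists a completely irreducible submodule $L$ of $M$ with $a_iM\subseteq L\neq M$ for all $i=1,\dots,n$. A nonzero $R$-module $N$ is secondal if $W_R(N)$ is an ideal of $R$. *)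

theory Defs
  imports Main HOL.Modules "HOL-Library.Product_Plus"
begin

text \<open>An R-module M is represented by a type 'm::ab_group_add together with a
scalar multiplication s :: 'r \<Rightarrow> 'm \<Rightarrow> 'm satisfying module s, where
'r::comm_ring_1 is the ring R. The module M is the whole type.\<close>

definition W :: "('r::comm_ring_1 \<Rightarrow> 'm::ab_group_add \<Rightarrow> 'm) \<Rightarrow> 'r set" where
  "W s = {r. range (s r) \<noteq> UNIV}"

definition is_ideal :: "'r::comm_ring_1 set \<Rightarrow> bool" where
  "is_ideal I \<longleftrightarrow> 0 \<in> I \<and> (\<forall>a\<in>I. \<forall>b\<in>I. a + b \<in> I) \<and> (\<forall>r. \<forall>a\<in>I. r * a \<in> I)"

definition ideal_gen :: "'r::comm_ring_1 set \<Rightarrow> 'r set" where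
  "ideal_gen A = {\<Sum>a\<in>F. c a * a | F c. finite F \<and> F \<subseteq> A}"

definition fg_ideal :: "'r::comm_ring_1 set \<Rightarrow> bool" where
  "fg_ideal I \<longleftrightarrow> (\<exists>A. finite A \<and> I = ideal_gen A)"

definition ideal_times :: "('r::comm_ring_1 \<Rightarrow> 'm::ab_group_add \<Rightarrow> 'm) \<Rightarrow> 'r set \<Rightarrow> 'm set" where
  "ideal_times s I = module.span s {s r x | r x. r \<in> I}"

definition dual_A :: "('r::comm_ring_1 \<Rightarrow> 'm::ab_group_add \<Rightarrow> 'm) \<Rightarrow> bool" where
  "dual_A s \<longleftrightarrow> (\<forall>I. fg_ideal I \<and> I \<subseteq> W s \<longrightarrow> ideal_times s I \<noteq> UNIV)"

definition completely_irreducible :: "('r::comm_ring_1 \<Rightarrow> 'm::ab_group_add \<Rightarrow> 'm) \<Rightarrow> 'm set \<Rightarrow> bool" where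
  "completely_irreducible s L \<longleftrightarrow> module.subspace s L \<and> L \<noteq> UNIV \<and>
     (\<forall>\<L>. (\<forall>Li\<in>\<L>. module.subspace s Li) \<and> L = \<Inter>\<L> \<longrightarrow> L \<in> \<L>)"

definition dual_strong_A :: "('r::comm_ring_1 \<Rightarrow> 'm::ab_group_add \<Rightarrow> 'm) \<Rightarrow> bool" where
  "dual_strong_A s \<longleftrightarrow> (\<forall>A. finite A \<and> A \<noteq> {} \<and> A \<subseteq> W s \<longrightarrow>
     (\<exists>L. completely_irreducible s L \<and> (\<forall>a\<in>A. range (s a) \<subseteq> L)))"

definition secondal :: "('r::comm_ring_1 \<Rightarrow> 'm::ab_group_add \<Rightarrow> 'm) \<Rightarrow> bool" where
  "secondal s \<longleftrightarrow> (UNIV :: 'm set) \<noteq> {0} \<and> is_ideal (W s)"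

definition dsum_scale :: "('r::comm_ring_1 \<Rightarrow> 'm::ab_group_add \<Rightarrow> 'm) \<Rightarrow> ('r \<Rightarrow> 'n::ab_group_add \<Rightarrow> 'n) \<Rightarrow> 'r \<Rightarrow> 'm \<times> 'n \<Rightarrow> 'm \<times> 'n" where
  "dsum_scale s s' r p = (s r (fst p), s' r (snd p))"

definition small_submodule :: "('r::comm_ring_1 \<Rightarrow> 'm::ab_group_add \<Rightarrow> 'm) \<Rightarrow> 'm set \<Rightarrow> bool" where
  "small_submodule s N \<longleftrightarrow> module.subspace s N \<and>
     (\<forall>X. module.subspace s X \<and> {x + n | x n. x \<in> X \<and> n \<in> N} = UNIV \<longrightarrow> X = UNIV)"

end

theory Submission
  imports Defs
begin

text \<open>Both parts are about transport along a surjective homomorphism \<open>f : P \<rightarrow> Q\<close>.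
Since \<open>rQ = f(rP)\<close> and \<open>IQ = f(IP)\<close>, we get \<open>W(Q) \<subseteq> W(P)\<close>, and preimages of completely
irreducible submodules of \<open>Q\<close> are completely irreducible in \<open>P\<close>, because every submodule
containing \<open>f\<^sup>-\<^sup>1(L)\<close> contains \<open>ker f\<close> and is therefore saturated. Hence when \<open>W(P) \<subseteq> W(Q)\<close>
the dual (strong) Property \<open>\<A>\<close> descends from \<open>Q\<close> to \<open>P\<close>; part (1) applies this to the projection
\<open>M \<oplus> M' \<rightarrow> M'\<close>, for which \<open>W(M \<oplus> M') = W(M) \<union> W(M')\<close>. If moreover \<open>ker f\<close> is small, a
submodule \<open>X\<close> of \<open>P\<close> with \<open>f(X) = Q\<close> is all of \<open>P\<close>, so \<open>W\<close>, the products \<open>IM\<close> and the zero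
module correspond exactly under \<open>f\<close>, which gives part (2).\<close>

lemma range_scale_subspace:
  assumes "module s" shows "module.subspace s (range (s r))"
proof -
  interpret module s by fact
  show ?thesis
  proof (unfold subspace_def, safe)
    show "0 \<in> range (s r)" by (metis rangeI scale_zero_right)
  next
    fix a b show "s r a + s r b \<in> range (s r)" by (metis rangeI scale_right_distrib)
  next
    fix c a show "s c (s r a) \<in> range (s r)" by (metis rangeI scale_left_commute)
  qed
qed

context module_hom
begin

lemma range_scale_image:
  assumes "surj f" shows "range (s2 r) = f ` range (s1 r)"
proof -
  have "range (s2 r) = s2 r ` range f" using assms by simp
  also have "\<dots> = f ` range (s1 r)" by (simp add: image_image scale)
  finally show ?thesis .
qed

lemma ideal_times_image:
  assumes "surj f" shows "f ` ideal_times s1 I = ideal_times s2 I"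
proof -
  have "f ` {s1 r x | r x. r \<in> I} = {s2 r y | r y. r \<in> I}"
  proof (intro equalityI subsetI)
    fix z assume "z \<in> {s2 r y | r y. r \<in> I}"
    then obtain r y where "r \<in> I" "z = s2 r y" by blast
    moreover obtain x where "y = f x" using assms by (metis surjD)
    ultimately have "z = f (s1 r x)" by (simp add: scale)
    with \<open>r \<in> I\<close> show "z \<in> f ` {s1 r x | r x. r \<in> I}" by blast
  qed (fastforce simp: scale)
  then show ?thesis
    unfolding ideal_times_def by (simp flip: span_image)
qed

lemma completely_irreducible_vimage:
  assumes "surj f" and L: "completely_irreducible s2 L"
  shows "completely_irreducible s1 (f -` L)"
proof -
  have sub: "m2.subspace L" and proper: "L \<noteq> UNIV"
    and irr: "\<And>\<L>. \<forall>K\<in>\<L>. m2.subspace K \<Longrightarrow> L = \<Inter>\<L> \<Longrightarrow> L \<in> \<L>"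
    using L unfolding completely_irreducible_def by blast+
  have "f -` L \<in> \<L>" if subs: "\<forall>K\<in>\<L>. m1.subspace K" and eq: "f -` L = \<Inter>\<L>" for \<L>
  proof -
    \<comment> \<open>each \<open>K \<in> \<L>\<close> contains \<open>f\<^sup>-\<^sup>1(L) \<supseteq> ker f\<close>\<close>
    have saturated: "f -` f ` K = K" if K: "K \<in> \<L>" for K
    proof
      show "f -` f ` K \<subseteq> K"
      proof
        fix x assume "x \<in> f -` f ` K"
        then obtain y where y: "y \<in> K" "f x = f y" by auto
        have "f (x - y) \<in> L" using y(2) m2.subspace_0[OF sub] by (simp add: diff)
        then have "x - y \<in> K" using eq K by blast
        from m1.subspace_add[OF _ this y(1)] subs K show "x \<in> K" by simp
      qed
    qed blast
    have "L = \<Inter>((`) f ` \<L>)"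
    proof (rule set_eqI)
      fix y
      obtain x where y: "y = f x" using \<open>surj f\<close> by (metis surjD)
      have "y \<in> L \<longleftrightarrow> (\<forall>K\<in>\<L>. x \<in> K)" using eq y by auto
      also have "\<dots> \<longleftrightarrow> (\<forall>K\<in>\<L>. x \<in> f -` f ` K)" using saturated by auto
      finally show "y \<in> L \<longleftrightarrow> y \<in> \<Inter>((`) f ` \<L>)" using y by auto
    qed
    then obtain K where "K \<in> \<L>" "L = f ` K"
      using irr[of "(`) f ` \<L>"] subs subspace_image by blast
    then show ?thesis using saturated by auto
  qed
  moreover have "f -` L \<noteq> UNIV"
    using proper surj_image_vimage_eq[OF \<open>surj f\<close>, of L] \<open>surj f\<close> by force
  ultimately show ?thesis
    unfolding completely_irreducible_def using subspace_vimage[OF sub] by blast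
qed

lemma dual_A_from_codomain:
  assumes "surj f" "W s1 \<subseteq> W s2" "dual_A s2" shows "dual_A s1"
  unfolding dual_A_def
proof (intro allI impI notI)
  fix I assume I: "fg_ideal I \<and> I \<subseteq> W s1" and full: "ideal_times s1 I = UNIV"
  have "ideal_times s2 I \<noteq> UNIV" using I assms(2,3) unfolding dual_A_def by blast
  moreover have "ideal_times s2 I = UNIV"
    using ideal_times_image[OF assms(1), of I] full assms(1) by simp
  ultimately show False by blast
qed

lemma dual_strong_A_from_codomain:
  assumes "surj f" "W s1 \<subseteq> W s2" "dual_strong_A s2" shows "dual_strong_A s1"
  unfolding dual_strong_A_def
proof (intro allI impI)
  fix A assume "finite A \<and> A \<noteq> {} \<and> A \<subseteq> W s1"
  with assms(2) have "finite A \<and> A \<noteq> {} \<and> A \<subseteq> W s2" by blast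
  with assms(3) have "\<exists>L. completely_irreducible s2 L \<and> (\<forall>a\<in>A. range (s2 a) \<subseteq> L)"
    unfolding dual_strong_A_def by blast
  then obtain L where L: "completely_irreducible s2 L" "\<forall>a\<in>A. range (s2 a) \<subseteq> L"
    by blast
  have "\<forall>a\<in>A. range (s1 a) \<subseteq> f -` L" using L(2) by (auto simp: scale image_subset_iff)
  then show "\<exists>L. completely_irreducible s1 L \<and> (\<forall>a\<in>A. range (s1 a) \<subseteq> L)"
    using completely_irreducible_vimage[OF assms(1) L(1)] by blast
qed

lemma image_eq_UNIV_iff_small_kernel:
  assumes "surj f" "small_submodule s1 {x. f x = 0}" "m1.subspace X"
  shows "f ` X = UNIV \<longleftrightarrow> X = UNIV"
proof
  assume fX: "f ` X = UNIV"
  have "{x + n | x n. x \<in> X \<and> n \<in> {x. f x = 0}} = UNIV"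
  proof (intro set_eqI iffI)
    fix m
    obtain x where x: "x \<in> X" "f x = f m" using fX by (metis UNIV_I imageE)
    then have "m = x + (m - x)" "f (m - x) = 0" by (simp_all add: diff)
    with x(1) show "m \<in> {x + n | x n. x \<in> X \<and> n \<in> {x. f x = 0}}" by blast
  qed simp
  with assms(2,3) show "X = UNIV" unfolding small_submodule_def by blast
qed (use assms(1) in simp)

lemma W_eq_small_kernel:
  assumes "surj f" "small_submodule s1 {x. f x = 0}" shows "W s1 = W s2"
  using range_scale_image[OF assms(1)]
    image_eq_UNIV_iff_small_kernel[OF assms range_scale_subspace[OF m1.module_axioms]]
  by (auto simp: W_def)

lemma dual_A_iff_small_kernel:
  assumes "surj f" "small_submodule s1 {x. f x = 0}" shows "dual_A s1 \<longleftrightarrow> dual_A s2"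
proof
  assume "dual_A s1"
  moreover have "ideal_times s2 I = UNIV \<longleftrightarrow> ideal_times s1 I = UNIV" for I
    using image_eq_UNIV_iff_small_kernel[OF assms, of "ideal_times s1 I"]
      ideal_times_image[OF assms(1), of I]
    by (simp add: ideal_times_def m1.subspace_span)
  ultimately show "dual_A s2" using W_eq_small_kernel[OF assms] by (simp add: dual_A_def)
qed (use dual_A_from_codomain W_eq_small_kernel assms in blast)

lemma secondal_iff_small_kernel:
  assumes "surj f" "small_submodule s1 {x. f x = 0}" shows "secondal s1 \<longleftrightarrow> secondal s2"
proof -
  have "(UNIV :: 'b set) = {0} \<longleftrightarrow> f ` {0} = UNIV"
    using image_eq_UNIV_iff_small_kernel[OF assms m1.subspace_single_0] by auto
  also have "\<dots> \<longleftrightarrow> (UNIV :: 'c set) = {0}" by auto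
  finally show ?thesis unfolding secondal_def W_eq_small_kernel[OF assms] by simp
qed

end

lemma module_dsum_scale:
  assumes "module s" "module s'" shows "module (dsum_scale s s')"
  using assms unfolding module_def dsum_scale_def by (auto simp: algebra_simps)

lemma module_hom_snd_dsum_scale:
  assumes "module s" "module s'" shows "module_hom (dsum_scale s s') s' snd"
  using assms module_dsum_scale by (auto simp: module_hom_def module_hom_axioms_def dsum_scale_def)

lemma W_dsum_scale: "W (dsum_scale s s') = W s \<union> W s'"
proof -
  have "range (dsum_scale s s' r) = range (s r) \<times> range (s' r)" for r
    by (auto simp: dsum_scale_def image_iff)
  then have "range (dsum_scale s s' r) = UNIV \<longleftrightarrow> range (s r) = UNIV \<and> range (s' r) = UNIV" for r
    using times_eq_iff[of "range (s r)" "range (s' r)" UNIV UNIV] by simp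
  then show ?thesis by (auto simp: W_def)
qed

theorem theorem2p12:
  fixes s :: "'r::comm_ring_1 \<Rightarrow> 'm::ab_group_add \<Rightarrow> 'm"
    and s' :: "'r \<Rightarrow> 'n::ab_group_add \<Rightarrow> 'n"
    and t :: "'r \<Rightarrow> 'p::ab_group_add \<Rightarrow> 'p"
    and u :: "'r \<Rightarrow> 'q::ab_group_add \<Rightarrow> 'q"
    and f :: "'p \<Rightarrow> 'q"
    and N :: "'p set"
  shows "(module s \<and> module s' \<and> W s \<subseteq> W s' \<longrightarrow>
            (dual_A s' \<longrightarrow> dual_A (dsum_scale s s')) \<and>
            (dual_strong_A s' \<longrightarrow> dual_strong_A (dsum_scale s s')))
       \<and> (module t \<and> module u \<and> module_hom t u f \<and> surj f \<and> {x. f x = 0} = N \<and>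
            small_submodule t N \<longrightarrow>
            (dual_A t \<longleftrightarrow> dual_A u) \<and> (secondal t \<longleftrightarrow> secondal u))"
proof (intro conjI impI)
  assume "module s \<and> module s' \<and> W s \<subseteq> W s'"
  then have snd: "module_hom (dsum_scale s s') s' snd"
    and W: "W (dsum_scale s s') \<subseteq> W s'"
    by (auto simp: module_hom_snd_dsum_scale W_dsum_scale)
  have surj: "surj (snd :: 'm \<times> 'n \<Rightarrow> 'n)" by (metis snd_conv surjI)
  show "dual_A s' \<Longrightarrow> dual_A (dsum_scale s s')"
    by (rule module_hom.dual_A_from_codomain[OF snd surj W])
  show "dual_strong_A s' \<Longrightarrow> dual_strong_A (dsum_scale s s')"
    by (rule module_hom.dual_strong_A_from_codomain[OF snd surj W])
next
  assume "module t \<and> module u \<and> module_hom t u f \<and> surj f \<and> {x. f x = 0} = N \<and>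
    small_submodule t N"
  then have hom: "module_hom t u f" and surj: "surj f" and small: "small_submodule t {x. f x = 0}"
    by auto
  show "dual_A t \<longleftrightarrow> dual_A u"
    by (rule module_hom.dual_A_iff_small_kernel[OF hom surj small])
  show "secondal t \<longleftrightarrow> secondal u"
    by (rule module_hom.secondal_iff_small_kernel[OF hom surj small])
qed

end
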